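(* Let $(M,g)$ be a $\mathcal{W}^{\star}$-symmetric space-time (i.e. $\nabla_m\mathcal{W}^{\star}_{ijkl}=0$) obeying Einstein's field equation for a purely electro-magnetic distribution, i.e. $R_{ij}=kT_{ij}$ with $k\neq0$ a constant and $T_{ij}$ a symmetric tensor with vanishing trace $g^{ij}T_{ij}=0$. Then the energy-momentum tensor is covariantly constant: $\nabla_m T_{jk}=0$.
   Context: A space-time is a $4$-dimensional Lorentzian manifold $(M,g)$ with Levi-Civita connection $\nabla$. $R_{ijkl}$ denotes the components of the Riemann curvature tensor, with index conventions such that the Ricci tensor is $R_{jk}=g^{il}R_{ijkl}$; $R=g^{jk}R_{jk}$ is the scalar curvature. The $\mathcal{W}^{\star}$-curvature tensor is $\mathcal{W}^{\star}_{ijkl}=R_{ijkl}-\tfrac{1}{3}\left[g_{jk}R_{il}-g_{jl}R_{ik}\right]$. *)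

theory Defs
  imports "HOL-Analysis.Analysis"
begin

text \<open>Local coordinate description of a 4-dimensional space-time: a coordinate
chart is an open set U of real^4; indices range over the 4-element type 4.
Scalar fields are functions real^4 => real.\<close>

type_synonym point = "real ^ 4"
type_synonym idx = 4

definition pd :: "idx \<Rightarrow> (point \<Rightarrow> real) \<Rightarrow> point \<Rightarrow> real" where
  "pd m f x = deriv (\<lambda>t. f (x + t *\<^sub>R axis m 1)) 0"

definition iter_pd :: "idx list \<Rightarrow> (point \<Rightarrow> real) \<Rightarrow> point \<Rightarrow> real" where
  "iter_pd ms f = foldr pd ms f"

definition smooth_on :: "point set \<Rightarrow> (point \<Rightarrow> real) \<Rightarrow> bool" where
  "smooth_on U f \<longleftrightarrow> (\<forall>ms. \<forall>x\<in>U. iter_pd ms f differentiable (at x))"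

definition metric_matrix :: "(idx \<Rightarrow> idx \<Rightarrow> point \<Rightarrow> real) \<Rightarrow> point \<Rightarrow> real^4^4" where
  "metric_matrix g x = (\<chi> i j. g i j x)"

definition minkowski :: "real^4^4" where
  "minkowski = (\<chi> i j. if i = j then (if i = 0 then -1 else 1) else 0)"

text \<open>Lorentzian metric on U: smooth symmetric components whose matrix has
signature (-,+,+,+) at each point (Sylvester normal form).\<close>
definition lorentzian_on :: "point set \<Rightarrow> (idx \<Rightarrow> idx \<Rightarrow> point \<Rightarrow> real) \<Rightarrow> bool" where
  "lorentzian_on U g \<longleftrightarrow> open U \<and>
     (\<forall>i j. smooth_on U (g i j)) \<and>
     (\<forall>i j. \<forall>x\<in>U. g i j x = g j i x) \<and>
     (\<forall>x\<in>U. \<exists>P::real^4^4. invertible P \<and>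
         transpose P ** metric_matrix g x ** P = minkowski)"

definition ginv :: "(idx \<Rightarrow> idx \<Rightarrow> point \<Rightarrow> real) \<Rightarrow> idx \<Rightarrow> idx \<Rightarrow> point \<Rightarrow> real" where
  "ginv g i j x = matrix_inv (metric_matrix g x) $ i $ j"

definition christoffel :: "(idx \<Rightarrow> idx \<Rightarrow> point \<Rightarrow> real) \<Rightarrow> idx \<Rightarrow> idx \<Rightarrow> idx \<Rightarrow> point \<Rightarrow> real" where
  "christoffel g k i j x = (1/2) * (\<Sum>l\<in>UNIV. ginv g k l x *
      (pd i (g l j) x + pd j (g l i) x - pd l (g i j) x))"

text \<open>R_{ijkl} = g(R(d_i,d_j) d_k, d_l) with R(X,Y)Z = nabla_X nabla_Y Z - nabla_Y nabla_X Z - nabla_[X,Y] Z,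
so that the Ricci tensor is R_{jk} = g^{il} R_{ijkl}.\<close>
definition riemann :: "(idx \<Rightarrow> idx \<Rightarrow> point \<Rightarrow> real) \<Rightarrow> idx \<Rightarrow> idx \<Rightarrow> idx \<Rightarrow> idx \<Rightarrow> point \<Rightarrow> real" where
  "riemann g i j k l x = (\<Sum>m\<in>UNIV. g l m x *
      (pd i (christoffel g m j k) x - pd j (christoffel g m i k) x
       + (\<Sum>p\<in>UNIV. christoffel g m i p x * christoffel g p j k x
                   - christoffel g m j p x * christoffel g p i k x)))"

definition ricci :: "(idx \<Rightarrow> idx \<Rightarrow> point \<Rightarrow> real) \<Rightarrow> idx \<Rightarrow> idx \<Rightarrow> point \<Rightarrow> real" where
  "ricci g j k x = (\<Sum>i\<in>UNIV. \<Sum>l\<in>UNIV. ginv g i l x * riemann g i j k l x)"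

definition scalar_curv :: "(idx \<Rightarrow> idx \<Rightarrow> point \<Rightarrow> real) \<Rightarrow> point \<Rightarrow> real" where
  "scalar_curv g x = (\<Sum>j\<in>UNIV. \<Sum>k\<in>UNIV. ginv g j k x * ricci g j k x)"

definition Wstar :: "(idx \<Rightarrow> idx \<Rightarrow> point \<Rightarrow> real) \<Rightarrow> idx \<Rightarrow> idx \<Rightarrow> idx \<Rightarrow> idx \<Rightarrow> point \<Rightarrow> real" where
  "Wstar g i j k l x = riemann g i j k l x
      - (1/3) * (g j k x * ricci g i l x - g j l x * ricci g i k x)"

definition cov2 :: "(idx \<Rightarrow> idx \<Rightarrow> point \<Rightarrow> real) \<Rightarrow> (idx \<Rightarrow> idx \<Rightarrow> point \<Rightarrow> real)
                    \<Rightarrow> idx \<Rightarrow> idx \<Rightarrow> idx \<Rightarrow> point \<Rightarrow> real" where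
  "cov2 g T m j k x = pd m (T j k) x
      - (\<Sum>p\<in>UNIV. christoffel g p m j x * T p k x + christoffel g p m k x * T j p x)"

definition cov4 :: "(idx \<Rightarrow> idx \<Rightarrow> point \<Rightarrow> real) \<Rightarrow> (idx \<Rightarrow> idx \<Rightarrow> idx \<Rightarrow> idx \<Rightarrow> point \<Rightarrow> real)
                    \<Rightarrow> idx \<Rightarrow> idx \<Rightarrow> idx \<Rightarrow> idx \<Rightarrow> idx \<Rightarrow> point \<Rightarrow> real" where
  "cov4 g W m i j k l x = pd m (W i j k l) x
      - (\<Sum>p\<in>UNIV. christoffel g p m i x * W p j k l x + christoffel g p m j x * W i p k l x
                 + christoffel g p m k x * W i j p l x + christoffel g p m l x * W i j k p x)"

end

theory Submission
  imports Defs
begin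

text \<open>Contracting \<open>W\<^sup>\<star>\<close> with \<open>g\<^sup>i\<^sup>l\<close> gives
\<open>g\<^sup>i\<^sup>l W\<^sup>\<star>\<^sub>i\<^sub>j\<^sub>k\<^sub>l = (4/3) R\<^sub>j\<^sub>k - (1/3) R g\<^sub>j\<^sub>k\<close>.
For a traceless energy-momentum tensor the field equation forces \<open>R = 0\<close>, so this contraction is
\<open>(4/3) k T\<^sub>j\<^sub>k\<close>. Since the Levi-Civita connection is metric (\<open>\<nabla> g\<^sup>i\<^sup>l = 0\<close>), covariant
differentiation commutes with the contraction, and \<open>\<nabla>W\<^sup>\<star> = 0\<close> yields \<open>\<nabla>T = 0\<close>.
The Leibniz rules behind these steps need smooth components; \<open>g\<^sup>i\<^sup>l\<close> is smooth by Cramer's rule.\<close>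

section \<open>Partial derivatives\<close>

lemma field_differentiable_along_line:
  fixes f :: "point \<Rightarrow> real"
  assumes "f differentiable at x"
  shows "(\<lambda>t. f (x + t *\<^sub>R a)) field_differentiable at 0"
proof -
  have "(\<lambda>t::real. x + t *\<^sub>R a) differentiable at 0" by (intro derivative_intros)
  moreover have "f differentiable at ((\<lambda>t::real. x + t *\<^sub>R a) 0)" using assms by simp
  ultimately have "f \<circ> (\<lambda>t::real. x + t *\<^sub>R a) differentiable at 0"
    by (rule differentiable_chain_at)
  then have "(\<lambda>t. f (x + t *\<^sub>R a)) differentiable at 0" by (simp add: o_def)
  then show ?thesis
    by (metis DERIV_deriv_iff_field_differentiable DERIV_deriv_iff_real_differentiable)
qed

lemma pd_const: "pd m (\<lambda>y. c) x = 0"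
  unfolding pd_def by simp

lemma pd_add:
  "f differentiable at x \<Longrightarrow> h differentiable at x \<Longrightarrow>
   pd m (\<lambda>y. f y + h y) x = pd m f x + pd m h x"
  unfolding pd_def by (intro deriv_add field_differentiable_along_line)

lemma pd_mult:
  "f differentiable at x \<Longrightarrow> h differentiable at x \<Longrightarrow>
   pd m (\<lambda>y. f y * h y) x = pd m f x * h x + f x * pd m h x"
  unfolding pd_def by (subst deriv_mult) (auto intro: field_differentiable_along_line)

lemma pd_cmult: "f differentiable at x \<Longrightarrow> pd m (\<lambda>y. c * f y) x = c * pd m f x"
  using pd_mult[of "\<lambda>y. c" x f m] by (simp add: pd_const)

lemma pd_inverse:
  "f differentiable at x \<Longrightarrow> f x \<noteq> 0 \<Longrightarrow>
   pd m (\<lambda>y. inverse (f y)) x = - pd m f x / (f x)\<^sup>2"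
  unfolding pd_def by (subst deriv_inverse) (auto intro: field_differentiable_along_line)

lemma pd_sum:
  "finite A \<Longrightarrow> (\<And>i. i \<in> A \<Longrightarrow> F i differentiable at x) \<Longrightarrow>
   pd m (\<lambda>y. \<Sum>i\<in>A. F i y) x = (\<Sum>i\<in>A. pd m (F i) x)"
proof (induction A rule: finite_induct)
  case (insert a A)
  then have "pd m (\<lambda>y. F a y + (\<Sum>i\<in>A. F i y)) x = pd m (F a) x + pd m (\<lambda>y. \<Sum>i\<in>A. F i y) x"
    by (intro pd_add) (auto intro!: differentiable_sum)
  with insert show ?case by simp
qed (simp add: pd_const)

lemma pd_cong_open:
  assumes "open U" "x \<in> U" "\<And>y. y \<in> U \<Longrightarrow> f y = h y"
  shows "pd m f x = pd m h x"
  unfolding pd_def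
proof (rule deriv_cong_ev)
  have "continuous (at 0) (\<lambda>t::real. x + t *\<^sub>R axis m 1)" by (intro continuous_intros)
  then have "eventually (\<lambda>t. x + t *\<^sub>R axis m 1 \<in> U) (nhds 0)"
    using assms(1,2) unfolding continuous_at by (auto simp: tendsto_def eventually_nhds_conv_at)
  then show "eventually (\<lambda>t. f (x + t *\<^sub>R axis m 1) = h (x + t *\<^sub>R axis m 1)) (nhds 0)"
    by eventually_elim (simp add: assms(3))
qed simp

lemma iter_pd_Nil [simp]: "iter_pd [] f = f"
  by (simp add: iter_pd_def)

lemma iter_pd_Cons: "iter_pd (m # ms) f = pd m (iter_pd ms f)"
  by (simp add: iter_pd_def)

lemma iter_pd_snoc: "iter_pd (ms @ [m]) f = iter_pd ms (pd m f)"
  by (simp add: iter_pd_def)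

lemma iter_pd_cong_open:
  assumes "open U" "\<And>y. y \<in> U \<Longrightarrow> f y = h y" "x \<in> U"
  shows "iter_pd ms f x = iter_pd ms h x"
  using assms(3)
proof (induction ms arbitrary: x)
  case (Cons m ms)
  then show ?case unfolding iter_pd_Cons using assms(1) by (intro pd_cong_open) auto
qed (simp add: assms(2))

lemma differentiable_cong_open:
  assumes "f differentiable at x" "open U" "x \<in> U" "\<And>y. y \<in> U \<Longrightarrow> f y = h y"
  shows "h differentiable at x"
  using assms has_derivative_transform_within_open unfolding differentiable_def by metis

section \<open>Smooth functions on an open set\<close>

lemma smooth_on_iff_pd:
  "smooth_on U f \<longleftrightarrow> (\<forall>x\<in>U. f differentiable at x) \<and> (\<forall>m. smooth_on U (pd m f))"
proof
  assume "smooth_on U f"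
  then show "(\<forall>x\<in>U. f differentiable at x) \<and> (\<forall>m. smooth_on U (pd m f))"
    unfolding smooth_on_def by (metis iter_pd_Nil iter_pd_snoc)
next
  assume f: "(\<forall>x\<in>U. f differentiable at x) \<and> (\<forall>m. smooth_on U (pd m f))"
  show "smooth_on U f" unfolding smooth_on_def
  proof
    fix ms show "\<forall>x\<in>U. iter_pd ms f differentiable at x"
    proof (cases ms rule: rev_cases)
      case (snoc ys m)
      then show ?thesis using f unfolding smooth_on_def by (simp add: iter_pd_snoc)
    qed (use f in simp)
  qed
qed

lemma smooth_on_differentiable: "smooth_on U f \<Longrightarrow> x \<in> U \<Longrightarrow> f differentiable at x"
  using smooth_on_iff_pd by blast

lemma smooth_on_pd: "smooth_on U f \<Longrightarrow> smooth_on U (\<lambda>y. pd m f y)"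
  using smooth_on_iff_pd by blast

lemma smooth_on_const: "smooth_on U (\<lambda>y. c)"
proof -
  have "\<exists>c'. iter_pd ms (\<lambda>y. c) = (\<lambda>y. c')" for ms
    by (induction ms) (auto simp: iter_pd_Cons pd_const[abs_def])
  then show ?thesis unfolding smooth_on_def by (metis differentiable_const)
qed

lemma smooth_on_cong_open:
  assumes "open U" "smooth_on U f" "\<And>y. y \<in> U \<Longrightarrow> f y = h y"
  shows "smooth_on U h"
  unfolding smooth_on_def
proof (intro allI ballI)
  fix ms x assume x: "x \<in> U"
  have d: "iter_pd ms f differentiable at x" using assms(2) x unfolding smooth_on_def by blast
  have e: "\<And>y. y \<in> U \<Longrightarrow> iter_pd ms f y = iter_pd ms h y"
    by (rule iter_pd_cong_open[OF assms(1,3)])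
  show "iter_pd ms h differentiable at x"
    by (rule differentiable_cong_open[OF d assms(1) x e])
qed

text \<open>The closure properties are proved for the whole class generated by \<open>+\<close>, \<open>*\<close> and
\<open>inverse\<close> at once: the derivative of a product or an inverse leaves each individual closure
property, but stays inside this class.\<close>

inductive smooth_generated :: "point set \<Rightarrow> (point \<Rightarrow> real) \<Rightarrow> bool" for U where
  base: "smooth_on U f \<Longrightarrow> smooth_generated U f"
| add: "smooth_generated U f \<Longrightarrow> smooth_generated U h \<Longrightarrow> smooth_generated U (\<lambda>y. f y + h y)"
| mult: "smooth_generated U f \<Longrightarrow> smooth_generated U h \<Longrightarrow> smooth_generated U (\<lambda>y. f y * h y)"
| inverse: "smooth_generated U f \<Longrightarrow> (\<forall>y\<in>U. f y \<noteq> 0) \<Longrightarrow>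
    smooth_generated U (\<lambda>y. inverse (f y))"

lemma smooth_generated_differentiable:
  "smooth_generated U f \<Longrightarrow> x \<in> U \<Longrightarrow> f differentiable at x"
proof (induction arbitrary: x rule: smooth_generated.induct)
  case (base f)
  then show ?case by (rule smooth_on_differentiable)
next
  case (add f h)
  then show ?case by (simp add: differentiable_add)
next
  case (mult f h)
  then show ?case by (simp add: differentiable_mult)
next
  case (inverse f)
  then show ?case by (simp add: differentiable_inverse)
qed

lemma smooth_generated_pd:
  assumes "smooth_generated U f" "open U"
  shows "\<exists>h. smooth_generated U h \<and> (\<forall>x\<in>U. pd m f x = h x)"
  using assms
proof (induction rule: smooth_generated.induct)
  case (base f)
  then show ?case using smooth_on_iff_pd smooth_generated.base by blast
next
  case (add f h)
  then obtain a b where "smooth_generated U a" "smooth_generated U b"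
    "\<forall>x\<in>U. pd m f x = a x" "\<forall>x\<in>U. pd m h x = b x" by auto
  with add show ?case
    by (intro exI[of _ "\<lambda>y. a y + b y"])
       (auto intro: smooth_generated.intros simp: pd_add smooth_generated_differentiable)
next
  case (mult f h)
  then obtain a b where "smooth_generated U a" "smooth_generated U b"
    "\<forall>x\<in>U. pd m f x = a x" "\<forall>x\<in>U. pd m h x = b x" by auto
  with mult show ?case
    by (intro exI[of _ "\<lambda>y. a y * h y + f y * b y"])
       (auto intro: smooth_generated.intros simp: pd_mult smooth_generated_differentiable)
next
  case (inverse f)
  then obtain a where a: "smooth_generated U a" "\<forall>x\<in>U. pd m f x = a x" by auto
  let ?d = "\<lambda>y. ((-1) * a y) * (inverse (f y) * inverse (f y))"
  have "smooth_generated U (\<lambda>y. -1)"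
    by (intro smooth_generated.base smooth_on_const)
  with a(1) inverse.hyps have "smooth_generated U ?d"
    by (intro smooth_generated.mult smooth_generated.inverse) auto
  moreover have "pd m (\<lambda>y. inverse (f y)) x = ?d x" if "x \<in> U" for x
    using that a(2) inverse.hyps
    by (subst pd_inverse) (auto simp: smooth_generated_differentiable power2_eq_square divide_inverse)
  ultimately show ?case by blast
qed

lemma smooth_generated_smooth_on:
  assumes "open U" "smooth_generated U f"
  shows "smooth_on U f"
proof -
  have "\<forall>f. smooth_generated U f \<longrightarrow> (\<forall>x\<in>U. iter_pd ms f differentiable at x)" for ms
  proof (induction ms rule: rev_induct)
    case Nil then show ?case by (simp add: smooth_generated_differentiable)
  next
    case (snoc m ms)
    show ?case
    proof (intro allI impI ballI)
      fix f x assume f: "smooth_generated U f" and x: "x \<in> U"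
      obtain h where h: "smooth_generated U h" "\<forall>x\<in>U. pd m f x = h x"
        using smooth_generated_pd[OF f assms(1)] by blast
      have d: "iter_pd ms h differentiable at x" using snoc.IH h(1) x by blast
      have e: "\<And>y. y \<in> U \<Longrightarrow> iter_pd ms h y = iter_pd ms (pd m f) y"
        using iter_pd_cong_open[OF assms(1), of h "pd m f"] h(2) by metis
      show "iter_pd (ms @ [m]) f differentiable at x"
        unfolding iter_pd_snoc by (rule differentiable_cong_open[OF d assms(1) x e])
    qed
  qed
  with assms(2) show ?thesis unfolding smooth_on_def by blast
qed

lemma smooth_on_add:
  "open U \<Longrightarrow> smooth_on U f \<Longrightarrow> smooth_on U h \<Longrightarrow> smooth_on U (\<lambda>y. f y + h y)"
  by (metis smooth_generated.base smooth_generated.add smooth_generated_smooth_on)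

lemma smooth_on_mult:
  "open U \<Longrightarrow> smooth_on U f \<Longrightarrow> smooth_on U h \<Longrightarrow> smooth_on U (\<lambda>y. f y * h y)"
  by (metis smooth_generated.base smooth_generated.mult smooth_generated_smooth_on)

lemma smooth_on_inverse:
  "open U \<Longrightarrow> smooth_on U f \<Longrightarrow> \<forall>y\<in>U. f y \<noteq> 0 \<Longrightarrow> smooth_on U (\<lambda>y. inverse (f y))"
  by (metis smooth_generated.base smooth_generated.inverse smooth_generated_smooth_on)

lemma smooth_on_diff:
  assumes "open U" "smooth_on U f" "smooth_on U h"
  shows "smooth_on U (\<lambda>y. f y - h y)"
proof -
  have "smooth_on U (\<lambda>y. f y + (-1) * h y)"
    using assms by (intro smooth_on_add smooth_on_mult smooth_on_const)
  then show ?thesis by simp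
qed

lemma smooth_on_sum:
  "open U \<Longrightarrow> (\<And>i. i \<in> A \<Longrightarrow> smooth_on U (F i)) \<Longrightarrow> smooth_on U (\<lambda>y. \<Sum>i\<in>A. F i y)"
  by (induction A rule: infinite_finite_induct) (auto intro: smooth_on_const smooth_on_add)

lemma smooth_on_prod:
  "open U \<Longrightarrow> (\<And>i. i \<in> A \<Longrightarrow> smooth_on U (F i)) \<Longrightarrow> smooth_on U (\<lambda>y. \<Prod>i\<in>A. F i y)"
  by (induction A rule: infinite_finite_induct) (auto intro: smooth_on_const smooth_on_mult)

lemma smooth_on_det:
  "open U \<Longrightarrow> (\<And>a b. smooth_on U (F a b)) \<Longrightarrow> smooth_on U (\<lambda>y. det (\<chi> a b. F a b y))"
  unfolding det_def by (intro smooth_on_sum smooth_on_mult smooth_on_prod smooth_on_const) auto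

section \<open>Index algebra\<close>

text \<open>Differentiating \<open>B A = 1\<close> (with \<open>P = \<partial>B\<close>, \<open>Q = \<partial>A\<close>) gives \<open>\<partial>B = - B (\<partial>A) B\<close>.\<close>

lemma inverse_matrix_derivative:
  fixes P B A Q :: "'n::finite \<Rightarrow> 'n \<Rightarrow> real"
  assumes product_rule: "\<And>i b. (\<Sum>a\<in>UNIV. P i a * A a b + B i a * Q a b) = 0"
    and right_inverse: "\<And>a l. (\<Sum>b\<in>UNIV. A a b * B b l) = (if a = l then 1 else 0)"
  shows "P i l = - (\<Sum>a\<in>UNIV. \<Sum>b\<in>UNIV. B i a * Q a b * B b l)"
proof -
  have "P i l = (\<Sum>a\<in>UNIV. P i a * (if a = l then 1 else 0))"
    by (simp add: if_distrib cong: if_cong)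
  also have "\<dots> = (\<Sum>b\<in>UNIV. (\<Sum>a\<in>UNIV. P i a * A a b) * B b l)"
    by (simp add: right_inverse[symmetric] sum_distrib_left sum_distrib_right mult.assoc)
       (rule sum.swap)
  also have "\<dots> = (\<Sum>b\<in>UNIV. (- (\<Sum>a\<in>UNIV. B i a * Q a b)) * B b l)"
  proof (rule sum.cong[OF refl])
    fix b
    have "(\<Sum>a\<in>UNIV. P i a * A a b) + (\<Sum>a\<in>UNIV. B i a * Q a b) = 0"
      using product_rule[of i b] by (simp add: sum.distrib)
    then have "(\<Sum>a\<in>UNIV. P i a * A a b) = - (\<Sum>a\<in>UNIV. B i a * Q a b)" by linarith
    then show "(\<Sum>a\<in>UNIV. P i a * A a b) * B b l = (- (\<Sum>a\<in>UNIV. B i a * Q a b)) * B b l"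
      by simp
  qed
  also have "\<dots> = - (\<Sum>a\<in>UNIV. \<Sum>b\<in>UNIV. B i a * Q a b * B b l)"
    by (subst sum.swap) (simp add: sum_distrib_right sum_negf)
  finally show ?thesis .
qed

text \<open>With \<open>B = g\<^sup>-\<^sup>1\<close> and \<open>dg a b c = \<partial>\<^sub>a g\<^sub>b\<^sub>c\<close>, \<open>\<Gamma> i p\<close> is the Christoffel symbol
\<open>\<Gamma>\<^sup>i\<^sub>m\<^sub>p\<close>; this is the identity behind \<open>\<nabla>\<^sub>m g\<^sup>i\<^sup>l = 0\<close>.\<close>

lemma christoffel_contraction_identity:
  fixes m :: "'n::finite" and B \<Gamma> :: "'n \<Rightarrow> 'n \<Rightarrow> real" and dg :: "'n \<Rightarrow> 'n \<Rightarrow> 'n \<Rightarrow> real"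
  assumes B_sym: "\<And>a b. B a b = B b a" and dg_sym: "\<And>a b c. dg a b c = dg a c b"
    and \<Gamma>_eq: "\<Gamma> = (\<lambda>i p. (1/2) * (\<Sum>q\<in>UNIV. B i q * (dg m q p + dg p q m - dg q m p)))"
  shows "(\<Sum>a\<in>UNIV. \<Sum>b\<in>UNIV. B i a * dg m a b * B b l) = (\<Sum>p\<in>UNIV. \<Gamma> i p * B p l + \<Gamma> l p * B i p)"
proof -
  define E where "E = (\<lambda>q p. dg m q p + dg p q m - dg q m p)"
  have \<Gamma>_E: "\<Gamma> = (\<lambda>i p. (1/2) * (\<Sum>q\<in>UNIV. B i q * E q p))" unfolding \<Gamma>_eq E_def ..
  have first: "(\<Sum>p\<in>UNIV. \<Gamma> i p * B p l) = (\<Sum>p\<in>UNIV. \<Sum>q\<in>UNIV. (1/2) * (B i q * B p l * E q p))"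
    unfolding \<Gamma>_E sum_distrib_left sum_distrib_right by (intro sum.cong refl) (simp only: mult_ac)
  have "(\<Sum>p\<in>UNIV. \<Gamma> l p * B i p) = (\<Sum>q\<in>UNIV. \<Sum>p\<in>UNIV. (1/2) * (B l p * B i q * E p q))"
    unfolding \<Gamma>_E sum_distrib_left sum_distrib_right by (intro sum.cong refl) (simp only: mult_ac)
  also have "\<dots> = (\<Sum>p\<in>UNIV. \<Sum>q\<in>UNIV. (1/2) * (B l p * B i q * E p q))"
    by (rule sum.swap)
  finally have second: "(\<Sum>p\<in>UNIV. \<Gamma> l p * B i p) = \<dots>" .
  have pointwise: "(1/2) * (B i q * B p l * E q p) + (1/2) * (B l p * B i q * E p q)
      = B i q * dg m q p * B p l" for p q
    using B_sym[of l p] dg_sym[of m p q] dg_sym[of q p m] dg_sym[of p m q]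
    unfolding E_def by (simp add: algebra_simps)
  have "(\<Sum>p\<in>UNIV. \<Gamma> i p * B p l + \<Gamma> l p * B i p) = (\<Sum>p\<in>UNIV. \<Sum>q\<in>UNIV. B i q * dg m q p * B p l)"
    unfolding sum.distrib first second sum.distrib[symmetric] pointwise ..
  also have "\<dots> = (\<Sum>a\<in>UNIV. \<Sum>b\<in>UNIV. B i a * dg m a b * B b l)"
    by (rule sum.swap)
  finally show ?thesis by simp
qed

lemma sum_rotate3:
  "(\<Sum>i\<in>A. \<Sum>l\<in>B. \<Sum>p\<in>C. f i l p) = (\<Sum>p\<in>C. \<Sum>i\<in>A. \<Sum>l\<in>B. f i l p)"
proof -
  have "(\<Sum>i\<in>A. \<Sum>l\<in>B. \<Sum>p\<in>C. f i l p) = (\<Sum>i\<in>A. \<Sum>p\<in>C. \<Sum>l\<in>B. f i l p)"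
    by (intro sum.cong refl sum.swap)
  also have "\<dots> = (\<Sum>p\<in>C. \<Sum>i\<in>A. \<Sum>l\<in>B. f i l p)"
    by (rule sum.swap)
  finally show ?thesis .
qed

text \<open>With \<open>G a b = \<Gamma>\<^sup>a\<^sub>m\<^sub>b\<close>, \<open>B = g\<^sup>-\<^sup>1\<close>, \<open>PB = \<partial>\<^sub>m B\<close> and \<open>PW = \<partial>\<^sub>m W\<close>, this says that \<open>\<nabla>\<^sub>m\<close> commutes with the
contraction of the first and last index once \<open>\<nabla>\<^sub>m g\<^sup>-\<^sup>1 = 0\<close>.\<close>

lemma contraction_leibniz_identity:
  fixes G B PB :: "'n::finite \<Rightarrow> 'n \<Rightarrow> real" and W PW :: "'n \<Rightarrow> 'n \<Rightarrow> 'n \<Rightarrow> 'n \<Rightarrow> real"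
  assumes PB: "\<And>i l. PB i l = - (\<Sum>p\<in>UNIV. G i p * B p l + G l p * B i p)"
  shows "(\<Sum>i\<in>UNIV. \<Sum>l\<in>UNIV. PB i l * W i j k l + B i l * PW i j k l)
      - (\<Sum>p\<in>UNIV. G p j * (\<Sum>i\<in>UNIV. \<Sum>l\<in>UNIV. B i l * W i p k l)
                   + G p k * (\<Sum>i\<in>UNIV. \<Sum>l\<in>UNIV. B i l * W i j p l))
    = (\<Sum>i\<in>UNIV. \<Sum>l\<in>UNIV. B i l * (PW i j k l
        - (\<Sum>p\<in>UNIV. G p i * W p j k l + G p j * W i p k l + G p k * W i j p l + G p l * W i j k p)))"
proof -
  define X where "X = (\<Sum>i\<in>UNIV. \<Sum>l\<in>UNIV. (\<Sum>p\<in>UNIV. G i p * B p l) * W i j k l)"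
  define Y where "Y = (\<Sum>i\<in>UNIV. \<Sum>l\<in>UNIV. (\<Sum>p\<in>UNIV. G l p * B i p) * W i j k l)"
  have PB_term: "(\<Sum>i\<in>UNIV. \<Sum>l\<in>UNIV. PB i l * W i j k l) = - X - Y"
  proof -
    have "PB i l * W i j k l
        = - ((\<Sum>p\<in>UNIV. G i p * B p l) * W i j k l) - (\<Sum>p\<in>UNIV. G l p * B i p) * W i j k l" for i l
      by (simp add: PB sum.distrib algebra_simps)
    then show ?thesis by (simp add: X_def Y_def sum_subtractf sum_negf)
  qed
  have first_index: "(\<Sum>i\<in>UNIV. \<Sum>l\<in>UNIV. B i l * (\<Sum>p\<in>UNIV. G p i * W p j k l)) = X"
  proof -
    have "(\<Sum>i\<in>UNIV. \<Sum>l\<in>UNIV. B i l * (\<Sum>p\<in>UNIV. G p i * W p j k l))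
        = (\<Sum>i\<in>UNIV. \<Sum>l\<in>UNIV. \<Sum>p\<in>UNIV. G p i * B i l * W p j k l)"
      by (simp add: sum_distrib_left mult_ac)
    also have "\<dots> = (\<Sum>p\<in>UNIV. \<Sum>i\<in>UNIV. \<Sum>l\<in>UNIV. G p i * B i l * W p j k l)"
      by (rule sum_rotate3)
    also have "\<dots> = (\<Sum>p\<in>UNIV. \<Sum>l\<in>UNIV. \<Sum>i\<in>UNIV. G p i * B i l * W p j k l)"
      by (intro sum.cong refl sum.swap)
    also have "\<dots> = X"
      by (simp add: X_def sum_distrib_right)
    finally show ?thesis .
  qed
  have last_index: "(\<Sum>i\<in>UNIV. \<Sum>l\<in>UNIV. B i l * (\<Sum>p\<in>UNIV. G p l * W i j k p)) = Y"
  proof -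
    have "(\<Sum>i\<in>UNIV. \<Sum>l\<in>UNIV. B i l * (\<Sum>p\<in>UNIV. G p l * W i j k p))
        = (\<Sum>i\<in>UNIV. \<Sum>l\<in>UNIV. \<Sum>p\<in>UNIV. G p l * B i l * W i j k p)"
      by (simp add: sum_distrib_left mult_ac)
    also have "\<dots> = (\<Sum>i\<in>UNIV. \<Sum>p\<in>UNIV. \<Sum>l\<in>UNIV. G p l * B i l * W i j k p)"
      by (intro sum.cong refl sum.swap)
    also have "\<dots> = Y"
      by (simp add: Y_def sum_distrib_right)
    finally show ?thesis .
  qed
  have middle_indices:
    "(\<Sum>i\<in>UNIV. \<Sum>l\<in>UNIV. B i l * (\<Sum>p\<in>UNIV. G p j * W i p k l + G p k * W i j p l))
      = (\<Sum>p\<in>UNIV. G p j * (\<Sum>i\<in>UNIV. \<Sum>l\<in>UNIV. B i l * W i p k l)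
                   + G p k * (\<Sum>i\<in>UNIV. \<Sum>l\<in>UNIV. B i l * W i j p l))"
  proof -
    have "(\<Sum>i\<in>UNIV. \<Sum>l\<in>UNIV. B i l * (\<Sum>p\<in>UNIV. G p j * W i p k l + G p k * W i j p l))
        = (\<Sum>i\<in>UNIV. \<Sum>l\<in>UNIV. \<Sum>p\<in>UNIV. G p j * (B i l * W i p k l))
          + (\<Sum>i\<in>UNIV. \<Sum>l\<in>UNIV. \<Sum>p\<in>UNIV. G p k * (B i l * W i j p l))"
      by (simp add: sum_distrib_left distrib_left sum.distrib mult_ac)
    also have "\<dots> = (\<Sum>p\<in>UNIV. \<Sum>i\<in>UNIV. \<Sum>l\<in>UNIV. G p j * (B i l * W i p k l))
          + (\<Sum>p\<in>UNIV. \<Sum>i\<in>UNIV. \<Sum>l\<in>UNIV. G p k * (B i l * W i j p l))"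
      by (subst (1 2) sum_rotate3) (rule refl)
    finally show ?thesis
      by (simp add: sum.distrib sum_distrib_left)
  qed
  have "(\<Sum>i\<in>UNIV. \<Sum>l\<in>UNIV. B i l * (PW i j k l
        - (\<Sum>p\<in>UNIV. G p i * W p j k l + G p j * W i p k l + G p k * W i j p l + G p l * W i j k p)))
      = (\<Sum>i\<in>UNIV. \<Sum>l\<in>UNIV. B i l * PW i j k l)
        - (\<Sum>i\<in>UNIV. \<Sum>l\<in>UNIV. B i l * (\<Sum>p\<in>UNIV. G p i * W p j k l))
        - (\<Sum>i\<in>UNIV. \<Sum>l\<in>UNIV. B i l * (\<Sum>p\<in>UNIV. G p j * W i p k l + G p k * W i j p l))
        - (\<Sum>i\<in>UNIV. \<Sum>l\<in>UNIV. B i l * (\<Sum>p\<in>UNIV. G p l * W i j k p))"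
    by (simp add: sum.distrib sum_subtractf right_diff_distrib distrib_left add.assoc)
  then show ?thesis
    using PB_term first_index last_index middle_indices by (simp add: sum.distrib)
qed

section \<open>Covariant derivatives in a chart\<close>

lemma cov2_cmult_cong:
  assumes "open U" "x \<in> U" "\<And>j k. S j k differentiable at x"
    and T_eq: "\<And>j k y. y \<in> U \<Longrightarrow> T j k y = c * S j k y"
  shows "cov2 g T m j k x = c * cov2 g S m j k x"
proof -
  have "pd m (T j k) x = pd m (\<lambda>y. c * S j k y) x"
    using assms(1,2) by (rule pd_cong_open) (rule T_eq)
  also have "\<dots> = c * pd m (S j k) x"
    by (rule pd_cmult) (rule assms(3))
  finally show ?thesis
    unfolding cov2_def using T_eq[OF assms(2)] by (simp add: algebra_simps sum_distrib_left)
qed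

definition contract_14 ::
  "(idx \<Rightarrow> idx \<Rightarrow> point \<Rightarrow> real) \<Rightarrow> (idx \<Rightarrow> idx \<Rightarrow> idx \<Rightarrow> idx \<Rightarrow> point \<Rightarrow> real)
    \<Rightarrow> idx \<Rightarrow> idx \<Rightarrow> point \<Rightarrow> real" where
  "contract_14 g W j k x = (\<Sum>i\<in>UNIV. \<Sum>l\<in>UNIV. ginv g i l x * W i j k l x)"

locale semi_riemannian_chart =
  fixes U :: "point set" and g :: "idx \<Rightarrow> idx \<Rightarrow> point \<Rightarrow> real"
  assumes open_chart: "open U"
    and smooth_metric: "smooth_on U (g i j)"
    and metric_sym: "x \<in> U \<Longrightarrow> g i j x = g j i x"
    and metric_nondegenerate: "x \<in> U \<Longrightarrow> det (metric_matrix g x) \<noteq> 0"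

lemma det_minkowski_nonzero: "det minkowski \<noteq> 0"
proof -
  have "det minkowski = (\<Prod>i\<in>UNIV. minkowski $ i $ i)"
    by (rule det_diagonal) (simp add: minkowski_def)
  also have "\<dots> \<noteq> 0"
    by (subst prod_zero_iff) (auto simp: minkowski_def)
  finally show ?thesis .
qed

lemma lorentzian_on_semi_riemannian_chart:
  assumes "lorentzian_on U g"
  shows "semi_riemannian_chart U g"
proof
  fix x assume "x \<in> U"
  then obtain P :: "real^4^4" where "transpose P ** metric_matrix g x ** P = minkowski"
    using assms unfolding lorentzian_on_def by blast
  then have "det (transpose P) * det (metric_matrix g x) * det P = det minkowski"
    by (metis det_mul)
  then show "det (metric_matrix g x) \<noteq> 0" using det_minkowski_nonzero by auto
qed (use assms in \<open>auto simp: lorentzian_on_def\<close>)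

context semi_riemannian_chart
begin

lemma metric_matrix_inverse:
  assumes "x \<in> U"
  shows "metric_matrix g x ** matrix_inv (metric_matrix g x) = mat 1 \<and>
    matrix_inv (metric_matrix g x) ** metric_matrix g x = mat 1"
proof -
  have "invertible (metric_matrix g x)"
    using metric_nondegenerate[OF assms] invertible_det_nz by blast
  then show ?thesis unfolding invertible_def matrix_inv_def by (rule someI_ex)
qed

lemma ginv_mult_metric: "x \<in> U \<Longrightarrow> (\<Sum>l\<in>UNIV. ginv g i l x * g l j x) = (if i = j then 1 else 0)"
  using metric_matrix_inverse[of x] unfolding vec_eq_iff matrix_matrix_mult_def ginv_def
  by (auto simp: metric_matrix_def mat_def)

lemma metric_mult_ginv: "x \<in> U \<Longrightarrow> (\<Sum>l\<in>UNIV. g i l x * ginv g l j x) = (if i = j then 1 else 0)"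
  using metric_matrix_inverse[of x] unfolding vec_eq_iff matrix_matrix_mult_def ginv_def
  by (auto simp: metric_matrix_def mat_def)

lemma ginv_sym:
  assumes x: "x \<in> U"
  shows "ginv g i j x = ginv g j i x"
proof -
  let ?G = "metric_matrix g x" and ?B = "matrix_inv (metric_matrix g x)"
  have G_sym: "transpose ?G = ?G"
    using metric_sym[OF x] by (simp add: vec_eq_iff transpose_def metric_matrix_def)
  have "transpose ?B = transpose ?B ** (?G ** ?B)" using metric_matrix_inverse[OF x] by simp
  also have "\<dots> = (transpose ?B ** transpose ?G) ** ?B" by (simp add: G_sym matrix_mul_assoc)
  also have "\<dots> = ?B"
    using metric_matrix_inverse[OF x] by (simp add: matrix_transpose_mul[symmetric] transpose_mat)
  finally have "transpose ?B $ i $ j = ?B $ i $ j" by simp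
  then show ?thesis unfolding ginv_def transpose_def by simp
qed

lemma ginv_cramer:
  assumes x: "x \<in> U"
  shows "ginv g i j x =
    det (\<chi> a b. if b = i then (if a = j then 1 else 0) else g a b x) * inverse (det (metric_matrix g x))"
proof -
  let ?G = "metric_matrix g x" and ?B = "matrix_inv (metric_matrix g x)"
  let ?v = "\<chi> k. ?B $ k $ j" and ?e = "\<chi> a. if a = j then 1 else (0::real)"
  have "?G *v ?v = ?e"
    using metric_matrix_inverse[OF x]
    unfolding vec_eq_iff matrix_matrix_mult_def matrix_vector_mult_def by (auto simp: mat_def)
  then have "?v $ i = det (\<chi> a c. if c = i then ?e $ a else ?G $ a $ c) / det ?G"
    using cramer[OF metric_nondegenerate[OF x]] by simp
  moreover have "(\<chi> a c. if c = i then ?e $ a else ?G $ a $ c)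
      = (\<chi> a b. if b = i then (if a = j then 1 else 0) else g a b x)"
    by (simp add: vec_eq_iff metric_matrix_def)
  ultimately show ?thesis by (simp add: ginv_def divide_inverse)
qed

lemma smooth_ginv: "smooth_on U (ginv g i j)"
proof (rule smooth_on_cong_open[OF open_chart])
  show "smooth_on U (\<lambda>y. det (\<chi> a b. if b = i then (if a = j then 1 else 0) else g a b y)
      * inverse (det (metric_matrix g y)))"
  proof (intro smooth_on_mult open_chart smooth_on_inverse)
    show "smooth_on U (\<lambda>y. det (\<chi> a b. if b = i then (if a = j then 1 else 0) else g a b y))"
    proof (rule smooth_on_det[OF open_chart])
      fix a b show "smooth_on U (\<lambda>y. if b = i then (if a = j then 1 else 0) else g a b y)"
        by (cases "b = i") (simp_all add: smooth_on_const smooth_metric)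
    qed
    show "smooth_on U (\<lambda>y. det (metric_matrix g y))"
      unfolding metric_matrix_def by (rule smooth_on_det[OF open_chart smooth_metric])
    show "\<forall>y\<in>U. det (metric_matrix g y) \<noteq> 0" using metric_nondegenerate by blast
  qed
qed (rule ginv_cramer[symmetric])

lemmas smooth_intros = smooth_on_mult smooth_on_add smooth_on_diff smooth_on_sum smooth_on_pd
  smooth_on_const smooth_ginv smooth_metric open_chart

lemma smooth_christoffel: "smooth_on U (christoffel g k i j)"
  unfolding christoffel_def[abs_def] by (intro smooth_intros)

lemma smooth_riemann: "smooth_on U (riemann g i j k l)"
  unfolding riemann_def[abs_def] by (intro smooth_intros smooth_christoffel)

lemma smooth_ricci: "smooth_on U (ricci g j k)"
  unfolding ricci_def[abs_def] by (intro smooth_intros smooth_riemann)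

lemma smooth_Wstar: "smooth_on U (Wstar g i j k l)"
  unfolding Wstar_def[abs_def] by (intro smooth_intros smooth_riemann smooth_ricci)

lemma smooth_contract_14:
  "(\<And>i j k l. smooth_on U (W i j k l)) \<Longrightarrow> smooth_on U (contract_14 g W j k)"
  unfolding contract_14_def[abs_def] by (intro smooth_intros)

lemma pd_ginv_mult_metric:
  assumes x: "x \<in> U"
  shows "(\<Sum>a\<in>UNIV. pd m (ginv g i a) x * g a b x + ginv g i a x * pd m (g a b) x) = 0"
proof -
  have "(\<Sum>a\<in>UNIV. pd m (ginv g i a) x * g a b x + ginv g i a x * pd m (g a b) x)
      = (\<Sum>a\<in>UNIV. pd m (\<lambda>y. ginv g i a y * g a b y) x)"
    by (intro sum.cong refl pd_mult[symmetric] smooth_on_differentiable[OF _ x] smooth_ginv smooth_metric)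
  also have "\<dots> = pd m (\<lambda>y. \<Sum>a\<in>UNIV. ginv g i a y * g a b y) x"
    by (rule pd_sum[symmetric]) (auto intro!: smooth_on_differentiable[OF _ x] smooth_intros)
  also have "\<dots> = pd m (\<lambda>y. if i = b then 1 else 0) x"
    by (rule pd_cong_open[OF open_chart x]) (simp add: ginv_mult_metric)
  also have "\<dots> = 0" by (rule pd_const)
  finally show ?thesis .
qed

lemma pd_ginv:
  assumes x: "x \<in> U"
  shows "pd m (ginv g i l) x =
    - (\<Sum>p\<in>UNIV. christoffel g i m p x * ginv g p l x + christoffel g l m p x * ginv g i p x)"
proof -
  have pd_metric_sym: "pd a (g b c) x = pd a (g c b) x" for a b c
    by (rule pd_cong_open[OF open_chart x]) (rule metric_sym)
  have "pd m (ginv g i l) x = - (\<Sum>a\<in>UNIV. \<Sum>b\<in>UNIV. ginv g i a x * pd m (g a b) x * ginv g b l x)"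
    by (rule inverse_matrix_derivative[where A = "\<lambda>a b. g a b x"])
       (simp_all add: pd_ginv_mult_metric[OF x] metric_mult_ginv[OF x])
  also have "(\<Sum>a\<in>UNIV. \<Sum>b\<in>UNIV. ginv g i a x * pd m (g a b) x * ginv g b l x)
      = (\<Sum>p\<in>UNIV. christoffel g i m p x * ginv g p l x + christoffel g l m p x * ginv g i p x)"
    by (rule christoffel_contraction_identity[where dg = "\<lambda>a b c. pd a (g b c) x"])
       (auto simp: ginv_sym[OF x] pd_metric_sym christoffel_def)
  finally show ?thesis .
qed

lemma cov2_contract_14:
  assumes W: "\<And>i j k l. smooth_on U (W i j k l)" and x: "x \<in> U"
  shows "cov2 g (contract_14 g W) m j k x = (\<Sum>i\<in>UNIV. \<Sum>l\<in>UNIV. ginv g i l x * cov4 g W m i j k l x)"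
proof -
  have product_differentiable: "(\<lambda>y. ginv g i l y * W i j k l y) differentiable at x" for i l
    by (intro smooth_on_differentiable[OF _ x] smooth_intros W)
  have "pd m (contract_14 g W j k) x
      = (\<Sum>i\<in>UNIV. pd m (\<lambda>y. \<Sum>l\<in>UNIV. ginv g i l y * W i j k l y) x)"
    unfolding contract_14_def[abs_def]
    by (rule pd_sum) (auto intro!: differentiable_sum product_differentiable)
  also have "\<dots> = (\<Sum>i\<in>UNIV. \<Sum>l\<in>UNIV. pd m (\<lambda>y. ginv g i l y * W i j k l y) x)"
    by (intro sum.cong refl pd_sum) (auto intro: product_differentiable)
  also have "\<dots> = (\<Sum>i\<in>UNIV. \<Sum>l\<in>UNIV. pd m (ginv g i l) x * W i j k l x
      + ginv g i l x * pd m (W i j k l) x)"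
    by (intro sum.cong refl pd_mult smooth_on_differentiable[OF _ x] smooth_ginv W)
  finally have pd_contract: "pd m (contract_14 g W j k) x = \<dots>" .
  show ?thesis
    unfolding cov2_def pd_contract cov4_def contract_14_def
    by (rule contraction_leibniz_identity[where G = "\<lambda>a b. christoffel g a m b x"
        and B = "\<lambda>i l. ginv g i l x" and W = "\<lambda>i j k l. W i j k l x"
        and PW = "\<lambda>i j k l. pd m (W i j k l) x", OF pd_ginv[OF x]])
qed

lemma contract_14_Wstar:
  assumes x: "x \<in> U"
  shows "contract_14 g (Wstar g) j k x = 4/3 * ricci g j k x - 1/3 * g j k x * scalar_curv g x"
proof -
  have "contract_14 g (Wstar g) j k x = (\<Sum>i\<in>UNIV. \<Sum>l\<in>UNIV. ginv g i l x * riemann g i j k l x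
      - 1/3 * g j k x * (ginv g i l x * ricci g i l x) + 1/3 * (ginv g i l x * g l j x) * ricci g i k x)"
    unfolding contract_14_def Wstar_def
    using metric_sym[OF x] by (intro sum.cong refl) (simp add: algebra_simps)
  also have "\<dots> = ricci g j k x - 1/3 * g j k x * scalar_curv g x
      + 1/3 * (\<Sum>i\<in>UNIV. (\<Sum>l\<in>UNIV. ginv g i l x * g l j x) * ricci g i k x)"
    unfolding ricci_def[of g j k x] scalar_curv_def
    by (simp add: sum.distrib sum_subtractf sum_distrib_left sum_distrib_right mult_ac)
  also have "\<dots> = ricci g j k x - 1/3 * g j k x * scalar_curv g x + 1/3 * ricci g j k x"
    by (simp add: ginv_mult_metric[OF x] if_distrib[of "\<lambda>c. c * _"] cong: if_cong)
  finally show ?thesis by simp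
qed

end

theorem mainTheorem10:
  fixes U :: "(real^4) set" and g T :: "4 \<Rightarrow> 4 \<Rightarrow> real^4 \<Rightarrow> real" and \<kappa> :: real
  assumes "lorentzian_on U g"
    and "\<And>m i j k l x. x \<in> U \<Longrightarrow> cov4 g (Wstar g) m i j k l x = 0"
    and "\<kappa> \<noteq> 0"
    and "\<And>i j x. x \<in> U \<Longrightarrow> ricci g i j x = \<kappa> * T i j x"
    and "\<And>i j x. x \<in> U \<Longrightarrow> T i j x = T j i x"
    and "\<And>x. x \<in> U \<Longrightarrow> (\<Sum>i\<in>UNIV. \<Sum>j\<in>UNIV. ginv g i j x * T i j x) = 0"
  shows "\<And>m j k x. x \<in> U \<Longrightarrow> cov2 g T m j k x = 0"
proof -
  interpret semi_riemannian_chart U g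
    using assms(1) by (rule lorentzian_on_semi_riemannian_chart)
  fix m j k x assume x: "x \<in> U"
  have scalar_zero: "scalar_curv g y = 0" if "y \<in> U" for y
  proof -
    have "scalar_curv g y = \<kappa> * (\<Sum>i\<in>UNIV. \<Sum>j\<in>UNIV. ginv g i j y * T i j y)"
      by (simp add: scalar_curv_def assms(4)[OF that] sum_distrib_left mult_ac)
    with assms(6)[OF that] show ?thesis by simp
  qed
  have T_eq: "T j k y = 3 / (4 * \<kappa>) * contract_14 g (Wstar g) j k y" if "y \<in> U" for j k y
    using assms(3) assms(4)[OF that] by (simp add: contract_14_Wstar[OF that] scalar_zero[OF that])
  have "cov2 g T m j k x = 3 / (4 * \<kappa>) * cov2 g (contract_14 g (Wstar g)) m j k x"
    by (rule cov2_cmult_cong[OF open_chart x _ T_eq])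
       (intro smooth_on_differentiable[OF _ x] smooth_contract_14 smooth_Wstar)
  also have "\<dots> = 0"
    by (simp add: cov2_contract_14[OF smooth_Wstar x] assms(2)[OF x])
  finally show "cov2 g T m j k x = 0" .
qed

end
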